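(* Let $X,Y\subseteq\mathbb{R}$ with $|X|=|Y|=\mathfrak{c}$ and $|X\setminus Y|=\mathfrak{c}$. Then $$\mathcal{B}_{f_X\oplus f_E^{\mathbb{R}\setminus X}}(\mathbb{R})\neq\mathcal{B}_{f_Y\oplus f_E^{\mathbb{R}\setminus Y}}(\mathbb{R}).$$
   Context: $\mathfrak{c}=|\mathbb{R}|$. For a set $Z$, a two-point selection on $Z$ is a map $f$ from the two-element subsets of $Z$ to $Z$ with $f(F)\in F$; write $r<_f s$ if $f(\{r,s\})=r$, and let $\tau_f$ be the topology on $Z$ generated (as a subbase) by all sets $\{x: x<_f r\}$ and $\{x: r<_f x\}$, $r\in Z$. For $Z\subseteq\mathbb{R}$ with $|Z|=\mathfrak{c}$, $f_Z$ denotes a two-point selection on $Z$ for which $\tau_{f_Z}$ is the discrete topology on $Z$. For $W\subseteq\mathbb{R}$, $f_E^W$ is the Euclidean selection on $W$: $f_E^W(\{r,s\})=\min\{r,s\}$. For a partition $\{P,Q\}$ of $\mathbb{R}$ and selections $f$ on $P$, $g$ on $Q$, the selection $f\oplus g$ on $\mathbb{R}$ is defined by $(f\oplus g)(\{x,y\})=x$ if $x\in P,y\in Q$; $=f(\{x,y\})$ if $x,y\in P$; $=g(\{x,y\})$ if $x,y\in Q$. For a selection $h$ on $\mathbb{R}$, $\mathcal{B}_h(\mathbb{R})$ is the $\sigma$-algebra generated by $\tau_h$. *)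

theory Defs
  imports "HOL-Analysis.Analysis" "HOL-Library.Equipollence"
begin

text \<open>A two-point selection on Z: a map f from the two-element subsets of Z
  (represented as a function on sets, only its values on such sets matter)
  with f F in F.\<close>
definition two_point_selection :: "real set \<Rightarrow> (real set \<Rightarrow> real) \<Rightarrow> bool" where
  "two_point_selection Z f \<longleftrightarrow>
     (\<forall>x\<in>Z. \<forall>y\<in>Z. x \<noteq> y \<longrightarrow> f {x, y} \<in> {x, y})"

definition sel_less :: "(real set \<Rightarrow> real) \<Rightarrow> real \<Rightarrow> real \<Rightarrow> bool" where
  "sel_less f r s \<longleftrightarrow> r \<noteq> s \<and> f {r, s} = r"

definition sel_subbase :: "real set \<Rightarrow> (real set \<Rightarrow> real) \<Rightarrow> real set set" where
  "sel_subbase Z f =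
     {{x \<in> Z. sel_less f x r} | r. r \<in> Z} \<union> {{x \<in> Z. sel_less f r x} | r. r \<in> Z}"

definition sel_topology :: "real set \<Rightarrow> (real set \<Rightarrow> real) \<Rightarrow> real topology" where
  "sel_topology Z f =
     topology (arbitrary union_of (finite intersection_of (\<lambda>S. S \<in> sel_subbase Z f) relative_to Z))"

definition euclid_sel :: "real set \<Rightarrow> real" where
  "euclid_sel F = Min F"

definition sel_sum :: "real set \<Rightarrow> (real set \<Rightarrow> real) \<Rightarrow> (real set \<Rightarrow> real) \<Rightarrow> real set \<Rightarrow> real" where
  "sel_sum P f g F =
     (if F \<subseteq> P then f F
      else if F \<subseteq> - P then g F
      else (THE x. x \<in> F \<and> x \<in> P))"

definition sel_borel :: "(real set \<Rightarrow> real) \<Rightarrow> real set set" where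
  "sel_borel h = sigma_sets UNIV {S. openin (sel_topology UNIV h) S}"

end

(*
  Write h_X for f_X (+) f_E.  Every point x of X except possibly the f_X-maximum has an
  f_X-successor r, and {z. z <_{h_X} r} is a tau_{h_X}-open subset of X containing x;
  since tau_{f_X} is discrete, x is isolated in tau_{h_X}.  So all c-many points of X - Y but
  one are isolated, and all 2^c subsets of them are tau_{h_X}-open, hence in B_{h_X}.
  On R - Y, however, h_Y is the Euclidean selection and points of Y precede all others,
  so tau_{h_Y} traces the Euclidean topology on R - Y, and every set of B_{h_Y} traces a
  Borel set there.  There are only c Borel sets, so the two sigma-algebras differ.
*)
theory Submission
  imports Defs
begin

lemma sel_sum_mixed:
  assumes "x \<in> P" "y \<notin> P"
  shows "sel_sum P f g {x, y} = x" "sel_sum P f g {y, x} = x"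
proof -
  have "(THE z. z \<in> {x, y} \<and> z \<in> P) = x" using assms by (intro the_equality) auto
  then show "sel_sum P f g {x, y} = x" using assms by (auto simp: sel_sum_def)
  then show "sel_sum P f g {y, x} = x" by (simp add: insert_commute)
qed

lemma sel_less_sel_sum_mixed:
  assumes "x \<in> P" "y \<notin> P"
  shows "sel_less (sel_sum P f g) x y" "\<not> sel_less (sel_sum P f g) y x"
  using assms sel_sum_mixed[OF assms, of f g] by (auto simp: sel_less_def)

lemma sel_less_sel_sum_inside:
  assumes "x \<in> P" "y \<in> P"
  shows "sel_less (sel_sum P f g) x y \<longleftrightarrow> sel_less f x y"
  using assms by (auto simp: sel_less_def sel_sum_def)

lemma sel_less_sel_sum_outside:
  assumes "x \<notin> P" "y \<notin> P"
  shows "sel_less (sel_sum P f euclid_sel) x y \<longleftrightarrow> x < y"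
  using assms by (auto simp: sel_less_def sel_sum_def euclid_sel_def min_def)

lemma openin_sel_topology_subbase:
  "T \<in> sel_subbase UNIV h \<Longrightarrow> openin (sel_topology UNIV h) T"
  unfolding sel_topology_def openin_subbase
  by (metis arbitrary_union_of_inc finite_intersection_of_inc relative_to_inc inf_top.left_neutral)

lemma continuous_map_complement_sel_sum:
  "continuous_map (subtopology euclidean (- P)) (sel_topology UNIV (sel_sum P f euclid_sel)) id"
  unfolding sel_topology_def
proof (rule continuous_map_into_topology_subbase)
  let ?h = "sel_sum P f euclid_sel"
  fix U assume "U \<in> sel_subbase UNIV ?h"
  then obtain r where U: "U = {x. sel_less ?h x r} \<or> U = {x. sel_less ?h r x}"
    unfolding sel_subbase_def by blast
  have "\<exists>V. open V \<and> U \<inter> - P = V \<inter> - P"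
  proof (cases "r \<in> P")
    case True
    then have "U \<inter> - P = {} \<or> U \<inter> - P = UNIV \<inter> - P"
      using U sel_less_sel_sum_mixed[OF True] by blast
    then show ?thesis using open_empty open_UNIV by blast
  next
    case False
    then have "U \<inter> - P = {..<r} \<inter> - P \<or> U \<inter> - P = {r<..} \<inter> - P"
      using U sel_less_sel_sum_outside[OF _ False] sel_less_sel_sum_outside[OF False] by auto
    then show ?thesis by (meson open_lessThan open_greaterThan)
  qed
  then show "openin (subtopology euclidean (- P))
              {x \<in> topspace (subtopology euclidean (- P)). id x \<in> U}"
    by (auto simp: openin_subtopology)
qed simp

lemma sel_sum_open_trace_complement:
  assumes "openin (sel_topology UNIV (sel_sum P f euclid_sel)) S"
  shows "\<exists>V. open V \<and> S \<inter> - P = V \<inter> - P"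
proof -
  have "openin (subtopology euclidean (- P)) {x \<in> - P. id x \<in> S}"
    using openin_continuous_map_preimage[OF continuous_map_complement_sel_sum assms] by simp
  then show ?thesis by (auto simp: openin_subtopology)
qed

lemma sel_borel_trace_complement:
  assumes "S \<in> sel_borel (sel_sum P f euclid_sel)"
  shows "S \<inter> - P \<in> (\<lambda>B. B \<inter> - P) ` sets borel"
  using assms unfolding sel_borel_def
proof (induction rule: sigma_sets.induct)
  case (Basic S)
  then obtain V where "open V" "S \<inter> - P = V \<inter> - P"
    using sel_sum_open_trace_complement by blast
  then show ?case by auto
next
  case Empty
  show ?case by (auto intro: image_eqI[of _ _ "{}"])
next
  case (Compl S)
  then obtain B where "B \<in> sets borel" "S \<inter> - P = B \<inter> - P" by blast
  then show ?case by (intro image_eqI[of _ _ "- B"]) auto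
next
  case (Union S)
  then have "\<forall>i. \<exists>B\<in>sets borel. S i \<inter> - P = B \<inter> - P" by blast
  then obtain B where "\<And>i. B i \<in> sets borel \<and> S i \<inter> - P = B i \<inter> - P" by metis
  then show ?case by (intro image_eqI[of _ _ "\<Union>i. B i"]) auto
qed

lemma topspace_sel_topology [simp]: "topspace (sel_topology Z f) = Z"
  by (simp add: sel_topology_def)

lemma continuous_map_sel_sum_restrict:
  "continuous_map (subtopology (sel_topology UNIV (sel_sum P f g)) P) (sel_topology P f) id"
proof (unfold sel_topology_def[of P f], rule continuous_map_into_topology_subbase)
  let ?h = "sel_sum P f g"
  fix U assume "U \<in> sel_subbase P f"
  then obtain s where s: "s \<in> P"
    and U: "U = {z \<in> P. sel_less f z s} \<or> U = {z \<in> P. sel_less f s z}"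
    unfolding sel_subbase_def by blast
  have "{z \<in> P. sel_less f z s} = P \<inter> {z. sel_less ?h z s}"
    "{z \<in> P. sel_less f s z} = P \<inter> {z. sel_less ?h s z}"
    using sel_less_sel_sum_inside s by auto
  moreover have "{z. sel_less ?h z s} \<in> sel_subbase UNIV ?h"
    "{z. sel_less ?h s z} \<in> sel_subbase UNIV ?h"
    unfolding sel_subbase_def by blast+
  ultimately obtain T where T: "T \<in> sel_subbase UNIV ?h" "U = P \<inter> T"
    using U by metis
  then have "{x \<in> topspace (subtopology (sel_topology UNIV ?h) P). id x \<in> U} = P \<inter> T"
    by auto
  then show "openin (subtopology (sel_topology UNIV ?h) P)
               {x \<in> topspace (subtopology (sel_topology UNIV ?h) P). id x \<in> U}"
    by (simp add: T(1) openin_sel_topology_subbase openin_subtopology_Int2)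
qed auto

lemma openin_sel_sum_singleton:
  assumes "sel_topology P f = discrete_topology P" "x \<in> P" "r \<in> P" "sel_less f x r"
  shows "openin (sel_topology UNIV (sel_sum P f g)) {x}"
proof -
  let ?h = "sel_sum P f g"
  have "openin (sel_topology P f) {x}" using assms(1,2) by simp
  then have "openin (subtopology (sel_topology UNIV ?h) P)
              {y \<in> topspace (subtopology (sel_topology UNIV ?h) P). id y \<in> {x}}"
    by (rule openin_continuous_map_preimage[OF continuous_map_sel_sum_restrict])
  also have "{y \<in> topspace (subtopology (sel_topology UNIV ?h) P). id y \<in> {x}} = {x}"
    using assms(2) by auto
  finally obtain V where V: "openin (sel_topology UNIV ?h) V" "{x} = V \<inter> P"
    unfolding openin_subtopology by blast
  define R where "R = {z. sel_less ?h z r}"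
  have R: "openin (sel_topology UNIV ?h) R"
    unfolding R_def by (rule openin_sel_topology_subbase) (auto simp: sel_subbase_def)
  have "R \<subseteq> P"
    unfolding R_def using sel_less_sel_sum_mixed(2)[OF assms(3)] by blast
  moreover have "x \<in> R"
    unfolding R_def using sel_less_sel_sum_inside[OF assms(2,3)] assms(4) by simp
  ultimately have "{x} = V \<inter> R" using V(2) by blast
  then show ?thesis using openin_Int[OF V(1) R] by simp
qed

lemma sel_borel_sel_sum_non_maximal_subset:
  assumes "sel_topology P f = discrete_topology P" "A \<subseteq> P"
    and "\<And>x. x \<in> A \<Longrightarrow> \<exists>r\<in>P. sel_less f x r"
  shows "A \<in> sel_borel (sel_sum P f g)"
proof -
  have "openin (sel_topology UNIV (sel_sum P f g)) {x}" if x: "x \<in> A" for x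
  proof -
    obtain r where "r \<in> P" "sel_less f x r" using assms(3)[OF x] by blast
    moreover have "x \<in> P" using assms(2) x by blast
    ultimately show ?thesis using openin_sel_sum_singleton[OF assms(1)] by blast
  qed
  then have "openin (sel_topology UNIV (sel_sum P f g)) A"
    by (subst openin_subopen) blast
  then show ?thesis unfolding sel_borel_def by (intro sigma_sets.Basic) simp
qed

lemma sel_less_successor_all_but_one:
  assumes "two_point_selection P f"
  obtains m where "\<And>x. x \<in> P \<Longrightarrow> x \<noteq> m \<Longrightarrow> \<exists>r\<in>P. sel_less f x r"
proof (cases "\<exists>m\<in>P. \<forall>r\<in>P. \<not> sel_less f m r")
  case True
  then obtain m where m: "m \<in> P" "\<forall>r\<in>P. \<not> sel_less f m r" by blast
  show ?thesis
  proof (rule that)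
    fix x assume x: "x \<in> P" "x \<noteq> m"
    have "\<not> sel_less f m x" using m(2) x(1) by blast
    then have "f {x, m} \<noteq> m" using x(2) by (simp add: sel_less_def insert_commute)
    moreover have "f {x, m} \<in> {x, m}"
      using assms m(1) x unfolding two_point_selection_def by blast
    ultimately have "sel_less f x m" using x(2) by (simp add: sel_less_def)
    then show "\<exists>r\<in>P. sel_less f x r" using m(1) by blast
  qed
next
  case False
  then show ?thesis using that by blast
qed

text \<open>A code is a countably branching tree \<open>t :: nat list \<Rightarrow> real\<close>: \<open>t []\<close> labels the
  root with the sigma-algebra operation, \<open>\<lambda>l. t (n # l)\<close> is its \<open>n\<close>-th subtree, and a leaf
  \<open>g r\<close> stores \<open>r\<close> at \<open>[0]\<close>.  Codes therefore number at most continuum many.\<close>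

inductive sigma_code :: "(real \<Rightarrow> 'a set) \<Rightarrow> (nat list \<Rightarrow> real) \<Rightarrow> 'a set \<Rightarrow> bool"
  for g where
  Basic: "t [] = 0 \<Longrightarrow> sigma_code g t (g (t [0]))"
| Empty: "t [] = 1 \<Longrightarrow> sigma_code g t {}"
| Compl: "t [] = 2 \<Longrightarrow> sigma_code g (\<lambda>l. t (0 # l)) S \<Longrightarrow> sigma_code g t (- S)"
| Union: "t [] = 3 \<Longrightarrow> (\<And>n. sigma_code g (\<lambda>l. t (n # l)) (S n)) \<Longrightarrow>
    sigma_code g t (\<Union>n. S n)"

lemma sigma_code_unique: "sigma_code g t S \<Longrightarrow> sigma_code g t S' \<Longrightarrow> S = S'"
proof (induction arbitrary: S' rule: sigma_code.induct)
  case (Basic t)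
  from Basic.prems show ?case by cases (use Basic.hyps in simp_all)
next
  case (Empty t)
  from Empty.prems show ?case by cases (use Empty.hyps in simp_all)
next
  case (Compl t S)
  from Compl.prems show ?case
  proof cases
    case (Compl S')
    then show ?thesis using Compl.IH by blast
  qed (use Compl.hyps in simp_all)
next
  case (Union t S)
  from Union.prems show ?case
  proof cases
    case (Union S')
    then have "S n = S' n" for n using Union.IH by blast
    then show ?thesis using Union by simp
  qed (use Union.hyps in simp_all)
qed

lemma sigma_code_exists: "S \<in> sigma_sets UNIV (range g) \<Longrightarrow> \<exists>t. sigma_code g t S"
proof (induction rule: sigma_sets.induct)
  case (Basic S)
  then obtain r where "S = g r" by auto
  moreover have "sigma_code g (\<lambda>l. if l = [] then 0 else r) (g r)"
    using sigma_code.Basic[of "\<lambda>l. if l = [] then 0 else r" g] by simp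
  ultimately show ?case by blast
next
  case Empty
  show ?case using sigma_code.Empty[of "\<lambda>l. 1" g] by auto
next
  case (Compl S)
  then obtain t where "sigma_code g t S" by blast
  then have "sigma_code g (\<lambda>l. case l of [] \<Rightarrow> 2 | n # l' \<Rightarrow> t l') (- S)"
    by (intro sigma_code.Compl) simp_all
  then show ?case by (metis Compl_eq_Diff_UNIV)
next
  case (Union S)
  then obtain t where "\<And>n. sigma_code g (t n) (S n)" by metis
  then have "sigma_code g (\<lambda>l. case l of [] \<Rightarrow> 3 | n # l' \<Rightarrow> t n l') (\<Union>n. S n)"
    by (intro sigma_code.Union) simp_all
  then show ?case by blast
qed

lemma countable_domain_fun_real_lepoll:
  "(UNIV :: ('i::countable \<Rightarrow> real) set) \<lesssim> (UNIV :: real set)"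
proof -
  obtain \<phi> :: "real \<Rightarrow> nat set" where \<phi>: "inj \<phi>"
    using nat_sets_eqpoll_reals unfolding eqpoll_def by (metis bij_betw_imp_inj_on bij_betw_inv)
  define \<psi> where "\<psi> t = to_nat ` {(i, n). n \<in> \<phi> (t i)}" for t :: "'i \<Rightarrow> real"
  have "inj \<psi>"
  proof (rule injI)
    fix t1 t2 assume "\<psi> t1 = \<psi> t2"
    then have "{(i, n). n \<in> \<phi> (t1 i)} = {(i, n). n \<in> \<phi> (t2 i)}"
      unfolding \<psi>_def by (simp add: inj_image_eq_iff)
    then have "\<phi> (t1 i) = \<phi> (t2 i)" for i by (auto simp: set_eq_iff)
    then show "t1 = t2" using \<phi> by (auto simp: inj_def)
  qed
  then have "(UNIV :: ('i \<Rightarrow> real) set) \<lesssim> (UNIV :: nat set set)"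
    unfolding lepoll_def by blast
  also have "\<dots> \<approx> (UNIV :: real set)" by (rule nat_sets_eqpoll_reals)
  finally show ?thesis .
qed

lemma sigma_sets_range_real_lepoll:
  "sigma_sets UNIV (range (g :: real \<Rightarrow> 'a set)) \<lesssim> (UNIV :: real set)"
proof -
  define code where "code S = (SOME t. sigma_code g t S)" for S
  have "sigma_code g (code S) S" if "S \<in> sigma_sets UNIV (range g)" for S
    unfolding code_def using sigma_code_exists[OF that] by (rule someI_ex)
  then have "inj_on code (sigma_sets UNIV (range g))"
    by (metis inj_onI sigma_code_unique)
  then have "sigma_sets UNIV (range g) \<lesssim> (UNIV :: (nat list \<Rightarrow> real) set)"
    unfolding lepoll_def by blast
  also have "\<dots> \<lesssim> (UNIV :: real set)" by (rule countable_domain_fun_real_lepoll)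
  finally show ?thesis .
qed

lemma borel_sets_lepoll_reals: "sets (borel :: real measure) \<lesssim> (UNIV :: real set)"
  using sigma_sets_range_real_lepoll[of lessThan] by (simp add: borel_Iio sets_measure_of)

lemma infinite_Diff_singleton_eqpoll:
  assumes "infinite A"
  shows "A - {a} \<approx> A"
proof (cases "a \<in> A")
  case True
  have "insert a (A - {a}) \<approx> A - {a}"
    using assms by (intro infinite_insert_eqpoll) simp
  then show ?thesis using True by (simp add: insert_absorb eqpoll_sym)
qed simp

theorem lemma3p5:
  fixes X Y :: "real set" and fX fY :: "real set \<Rightarrow> real"
  assumes "X \<approx> (UNIV :: real set)" and "Y \<approx> (UNIV :: real set)"
    and "X - Y \<approx> (UNIV :: real set)"
    and "two_point_selection X fX" and "sel_topology X fX = discrete_topology X"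
    and "two_point_selection Y fY" and "sel_topology Y fY = discrete_topology Y"
  shows "sel_borel (sel_sum X fX euclid_sel) \<noteq> sel_borel (sel_sum Y fY euclid_sel)"
proof
  let ?hX = "sel_sum X fX euclid_sel" and ?hY = "sel_sum Y fY euclid_sel"
  assume eq: "sel_borel ?hX = sel_borel ?hY"
  obtain m where m: "\<And>x. x \<in> X \<Longrightarrow> x \<noteq> m \<Longrightarrow> \<exists>r\<in>X. sel_less fX x r"
    using sel_less_successor_all_but_one[OF assms(4)] by blast
  define Z where "Z = X - Y - {m}"
  have "infinite (X - Y)"
    using eqpoll_finite_iff[OF assms(3)] infinite_UNIV_char_0 by blast
  then have "Z \<approx> X - Y"
    unfolding Z_def by (rule infinite_Diff_singleton_eqpoll)
  then have Z: "Z \<approx> (UNIV :: real set)"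
    using assms(3) by (rule eqpoll_trans)
  have "Pow Z \<subseteq> (\<lambda>B. B \<inter> - Y) ` sets borel"
  proof
    fix A assume A: "A \<in> Pow Z"
    then have "A \<in> sel_borel ?hY"
      unfolding eq[symmetric] using m
      by (intro sel_borel_sel_sum_non_maximal_subset[OF assms(5)]) (auto simp: Z_def)
    then have "A \<inter> - Y \<in> (\<lambda>B. B \<inter> - Y) ` sets borel"
      by (rule sel_borel_trace_complement)
    moreover have "A \<inter> - Y = A" using A by (auto simp: Z_def)
    ultimately show "A \<in> (\<lambda>B. B \<inter> - Y) ` sets borel" by simp
  qed
  then have "Pow Z \<lesssim> sets (borel :: real measure)" by (rule subset_image_lepoll)
  also have "\<dots> \<lesssim> (UNIV :: real set)" by (rule borel_sets_lepoll_reals)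
  also have "\<dots> \<approx> Z" using Z by (rule eqpoll_sym)
  finally have "Z \<approx> Pow Z" using lepoll_Pow_self lepoll_antisym by blast
  then show False using lesspoll_Pow_self unfolding lesspoll_def by blast
qed

end
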